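(* Let $T$ be a spherically homogeneous rooted tree in which every vertex has at least $2$ children, and let $G\le\mathrm{Aut}~T$ be a just-infinite branch group. Then $G$ has property $\mathrm{(VRC)}$ if and only if $G$ is torsion.
   Context: $\mathrm{Aut}~T$ is the group of automorphisms of $T$ fixing the root; $\mathcal{L}_n$ is the $n$th level; $T_v$ is the subtree of descendants of $v$. For $G\le\mathrm{Aut}~T$, $\mathrm{rist}_G(v)$ is the subgroup of elements of $G$ fixing every vertex outside $T_v$, and $\mathrm{Rist}_G(n)=\prod_{v\in\mathcal{L}_n}\mathrm{rist}_G(v)$. $G$ is branch if it acts transitively on every level and each $\mathrm{Rist}_G(n)$ has finite index in $G$. A group is just-infinite if it is infinite and every non-trivial normal subgroup has finite index. $H\le G$ is a virtual retract of $G$ if there is a finite-index $K\le G$ containing $H$ and a homomorphism $K\to H$ restricting to the identity on $H$. $G$ has property $\mathrm{(VRC)}$ if every cyclic subgroup of $G$ is a virtual retract of $G$. $G$ is torsion if every element has finite order. *)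

theory Defs
  imports "HOL-Algebra.Algebra"
begin

text \<open>The spherically homogeneous rooted tree with branching sequence m:
  vertices at level n are words x_0 ... x_(n-1) with x_i < m i; the root is [].\<close>

definition tree_vertices :: "(nat \<Rightarrow> nat) \<Rightarrow> nat list set" where
  "tree_vertices m = {xs. \<forall>i<length xs. xs ! i < m i}"

definition tree_level :: "(nat \<Rightarrow> nat) \<Rightarrow> nat \<Rightarrow> nat list set" where
  "tree_level m n = {xs \<in> tree_vertices m. length xs = n}"

definition subtree :: "(nat \<Rightarrow> nat) \<Rightarrow> nat list \<Rightarrow> nat list set" where
  "subtree m v = {w \<in> tree_vertices m. \<exists>ys. w = v @ ys}"

text \<open>Automorphisms of T fixing the root: bijections of the vertex set preserving
  the edge (parent-child) relation in both directions, fixing the root; extended by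
  the identity outside the vertex set so that they form a group under composition.\<close>
definition is_tree_aut :: "(nat \<Rightarrow> nat) \<Rightarrow> (nat list \<Rightarrow> nat list) \<Rightarrow> bool" where
  "is_tree_aut m f \<longleftrightarrow>
     bij_betw f (tree_vertices m) (tree_vertices m)
   \<and> (\<forall>x. x \<notin> tree_vertices m \<longrightarrow> f x = x)
   \<and> f [] = []
   \<and> (\<forall>u\<in>tree_vertices m. \<forall>v\<in>tree_vertices m.
        (\<exists>i. v = u @ [i]) \<longleftrightarrow> (\<exists>i. f v = f u @ [i]))"

definition aut_tree :: "(nat \<Rightarrow> nat) \<Rightarrow> (nat list \<Rightarrow> nat list) monoid" where
  "aut_tree m = \<lparr>carrier = {f. is_tree_aut m f}, monoid.mult = (\<circ>), one = id\<rparr>"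

abbreviation sub_grp :: "(nat \<Rightarrow> nat) \<Rightarrow> (nat list \<Rightarrow> nat list) set \<Rightarrow> (nat list \<Rightarrow> nat list) monoid" where
  "sub_grp m H \<equiv> (aut_tree m)\<lparr>carrier := H\<rparr>"

definition finite_index :: "(nat \<Rightarrow> nat) \<Rightarrow> (nat list \<Rightarrow> nat list) set \<Rightarrow> (nat list \<Rightarrow> nat list) set \<Rightarrow> bool" where
  "finite_index m G K \<longleftrightarrow> finite (rcosets\<^bsub>sub_grp m G\<^esub> K)"

definition rist :: "(nat \<Rightarrow> nat) \<Rightarrow> (nat list \<Rightarrow> nat list) set \<Rightarrow> nat list \<Rightarrow> (nat list \<Rightarrow> nat list) set" where
  "rist m G v = {g \<in> G. \<forall>w \<in> tree_vertices m. w \<notin> subtree m v \<longrightarrow> g w = w}"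

text \<open>Rist_G(n): the (internal, direct) product of the rigid stabilisers of level n,
  i.e. the subgroup they generate.\<close>
definition Rist :: "(nat \<Rightarrow> nat) \<Rightarrow> (nat list \<Rightarrow> nat list) set \<Rightarrow> nat \<Rightarrow> (nat list \<Rightarrow> nat list) set" where
  "Rist m G n = generate (aut_tree m) (\<Union>v \<in> tree_level m n. rist m G v)"

definition level_transitive :: "(nat \<Rightarrow> nat) \<Rightarrow> (nat list \<Rightarrow> nat list) set \<Rightarrow> bool" where
  "level_transitive m G \<longleftrightarrow>
     (\<forall>n. \<forall>u \<in> tree_level m n. \<forall>v \<in> tree_level m n. \<exists>g \<in> G. g u = v)"

definition branch_group :: "(nat \<Rightarrow> nat) \<Rightarrow> (nat list \<Rightarrow> nat list) set \<Rightarrow> bool" where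
  "branch_group m G \<longleftrightarrow> level_transitive m G \<and> (\<forall>n. finite_index m G (Rist m G n))"

definition just_infinite :: "(nat \<Rightarrow> nat) \<Rightarrow> (nat list \<Rightarrow> nat list) set \<Rightarrow> bool" where
  "just_infinite m G \<longleftrightarrow> infinite G \<and>
     (\<forall>N. N \<lhd> sub_grp m G \<and> N \<noteq> {\<one>\<^bsub>aut_tree m\<^esub>} \<longrightarrow> finite_index m G N)"

definition virtual_retract :: "(nat \<Rightarrow> nat) \<Rightarrow> (nat list \<Rightarrow> nat list) set \<Rightarrow> (nat list \<Rightarrow> nat list) set \<Rightarrow> bool" where
  "virtual_retract m G H \<longleftrightarrow>
     (\<exists>K. subgroup K (sub_grp m G) \<and> finite_index m G K \<and> H \<subseteq> K \<and>
        (\<exists>\<phi> \<in> hom (sub_grp m K) (sub_grp m H). \<forall>h \<in> H. \<phi> h = h))"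

definition has_VRC :: "(nat \<Rightarrow> nat) \<Rightarrow> (nat list \<Rightarrow> nat list) set \<Rightarrow> bool" where
  "has_VRC m G \<longleftrightarrow> (\<forall>g \<in> G. virtual_retract m G (generate (aut_tree m) {g}))"

definition torsion_group :: "(nat \<Rightarrow> nat) \<Rightarrow> (nat list \<Rightarrow> nat list) set \<Rightarrow> bool" where
  "torsion_group m G \<longleftrightarrow> (\<forall>g \<in> G. \<exists>n::nat. n > 0 \<and> g [^]\<^bsub>aut_tree m\<^esub> n = \<one>\<^bsub>aut_tree m\<^esub>)"

end

theory Submission
  imports Defs
begin

text \<open>
  If \<open>G\<close> is torsion, a cyclic subgroup \<open>H\<close> is finite, so the pointwise stabiliser \<open>N\<close> of a large
  enough ball is a normal subgroup of finite index with \<open>N \<inter> H = 1\<close>; then \<open>NH\<close> has finite index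
  and \<open>NH \<rightarrow> NH/N \<cong> H\<close> is a retraction.

  Conversely, let \<open>g\<close> have infinite order and let \<open>\<phi> : K \<rightarrow> \<langle>g\<rangle>\<close> be a retraction defined on a
  subgroup \<open>K\<close> of finite index. The normal core of \<open>ker \<phi>\<close> meets the infinite group \<open>\<langle>g\<rangle>\<close>
  trivially, hence is trivial because \<open>G\<close> is just infinite. As \<open>\<langle>g\<rangle>\<close> is abelian, every
  commutator of the normal core \<open>A\<close> of \<open>K\<close> lies in the normal core of \<open>ker \<phi>\<close>, so \<open>A\<close> is an abelian normal
  subgroup of finite index. A branch group has none: a nontrivial \<open>a \<in> A\<close> can be conjugated
  to move a vertex \<open>v\<close> whose rigid stabiliser is infinite and therefore meets \<open>A\<close> in some
  \<open>b \<noteq> 1\<close>; but \<open>a\<close> carries the subtree at \<open>v\<close>, on which \<open>b\<close> acts, into a region fixed by \<open>b\<close>,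
  so \<open>a\<close> and \<open>b\<close> cannot commute.
\<close>

section \<open>Subgroups of finite index\<close>

definition normal_core :: "('a, 'b) monoid_scheme \<Rightarrow> 'a set \<Rightarrow> 'a set" where
  "normal_core G K = {c \<in> carrier G. \<forall>z \<in> carrier G. z \<otimes>\<^bsub>G\<^esub> c \<otimes>\<^bsub>G\<^esub> inv\<^bsub>G\<^esub> z \<in> K}"

context group
begin

lemma inv_mult_cancel_left [simp]: "x \<in> carrier G \<Longrightarrow> y \<in> carrier G \<Longrightarrow> inv x \<otimes> (x \<otimes> y) = y"
  by (simp add: m_assoc[symmetric])

lemma mult_inv_cancel_left [simp]: "x \<in> carrier G \<Longrightarrow> y \<in> carrier G \<Longrightarrow> x \<otimes> (inv x \<otimes> y) = y"
  by (simp add: m_assoc[symmetric])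

lemma rcosets_eq_image: "rcosets K = (\<lambda>a. K #> a) ` carrier G"
  by (auto simp: RCOSETS_def)

lemma rcos_eq_imp_mult_inv_mem:
  assumes "subgroup K G" "a \<in> carrier G" "b \<in> carrier G" "K #> a = K #> b"
  shows "a \<otimes> inv b \<in> K"
  using assms repr_independenceD subgroup.rcos_module_imp is_group by metis

lemma finite_rcosets_of_separating_map:
  assumes K: "subgroup K G" and fin: "finite (f ` carrier G)"
    and sep: "\<And>a b. a \<in> carrier G \<Longrightarrow> b \<in> carrier G \<Longrightarrow> f a = f b \<Longrightarrow> a \<otimes> inv b \<in> K"
  shows "finite (rcosets K)"
proof -
  define rep where "rep y = (SOME a. a \<in> carrier G \<and> f a = y)" for y
  have "K #> a = K #> rep (f a)" if a: "a \<in> carrier G" for a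
  proof -
    have rep: "rep (f a) \<in> carrier G \<and> f (rep (f a)) = f a"
      unfolding rep_def by (rule someI[of _ a]) (use a in simp)
    then have "rep (f a) \<otimes> inv a \<in> K"
      using sep a by metis
    then show ?thesis
      using K a rep repr_independence subgroup.rcos_module_rev is_group by metis
  qed
  then have "rcosets K \<subseteq> (\<lambda>y. K #> rep y) ` f ` carrier G"
    unfolding RCOSETS_def by blast
  then show ?thesis
    using fin finite_surj by blast
qed

lemma finite_rcosets_mono:
  assumes "subgroup N G" "subgroup K G" "N \<subseteq> K" "finite (rcosets N)"
  shows "finite (rcosets K)"
proof (rule finite_rcosets_of_separating_map[of K "\<lambda>a. N #> a"])
  show "finite ((\<lambda>a. N #> a) ` carrier G)"
    using assms(4) by (simp add: rcosets_eq_image)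
  show "a \<otimes> inv b \<in> K" if "a \<in> carrier G" "b \<in> carrier G" "N #> a = N #> b" for a b
    using rcos_eq_imp_mult_inv_mem[OF assms(1) that] assms(3) by blast
qed (rule assms(2))

lemma finite_rcosets_pigeonhole:
  assumes K: "subgroup K G" "finite (rcosets K)" and S: "S \<subseteq> carrier G" "infinite S"
  obtains a b where "a \<in> S" "b \<in> S" "a \<noteq> b" "a \<otimes> inv b \<in> K"
proof -
  have "(\<lambda>a. K #> a) ` S \<subseteq> rcosets K"
    using S(1) by (auto simp: RCOSETS_def)
  then have "\<not> inj_on (\<lambda>a. K #> a) S"
    using K(2) S(2) finite_imageD finite_subset by metis
  then obtain a b where "a \<in> S" "b \<in> S" "a \<noteq> b" "K #> a = K #> b"
    unfolding inj_on_def by blast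
  then show thesis
    using that rcos_eq_imp_mult_inv_mem[OF K(1)] S(1) by blast
qed

lemma finite_carrier_of_finite_rcosets:
  assumes "subgroup K G" "finite (rcosets K)" "finite K"
  shows "finite (carrier G)"
proof -
  have "finite (K #> a)" for a
    using assms(3) by (simp add: r_coset_def)
  then show ?thesis
    using rcosets_part_G[OF assms(1)] assms(2) by (metis finite_Union rcosets_eq_image imageE)
qed

lemma normal_core_subset: "subgroup K G \<Longrightarrow> normal_core G K \<subseteq> K"
  unfolding normal_core_def by (auto dest: bspec[of _ _ \<one>])

lemma normal_core_normal:
  assumes K: "subgroup K G"
  shows "normal_core G K \<lhd> G"
proof -
  have conj_closed: "z \<otimes> (x \<otimes> c \<otimes> inv x) \<otimes> inv z \<in> K"
    if "c \<in> normal_core G K" "x \<in> carrier G" "z \<in> carrier G" for c x z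
  proof -
    have "z \<otimes> x \<otimes> c \<otimes> inv (z \<otimes> x) \<in> K"
      using that by (simp add: normal_core_def)
    then show ?thesis
      using that by (simp add: normal_core_def inv_mult_group m_assoc)
  qed
  have "subgroup (normal_core G K) G"
  proof (rule subgroupI)
    show "normal_core G K \<noteq> {}"
      using K by (auto simp: normal_core_def subgroup.one_closed)
  next
    fix c assume c: "c \<in> normal_core G K"
    have "z \<otimes> inv c \<otimes> inv z = inv (z \<otimes> c \<otimes> inv z)" if "z \<in> carrier G" for z
      using c that by (simp add: normal_core_def inv_mult_group m_assoc)
    then show "inv c \<in> normal_core G K"
      using c K by (auto simp: normal_core_def subgroup.m_inv_closed)
  next
    fix c d assume cd: "c \<in> normal_core G K" "d \<in> normal_core G K"
    have "z \<otimes> (c \<otimes> d) \<otimes> inv z = (z \<otimes> c \<otimes> inv z) \<otimes> (z \<otimes> d \<otimes> inv z)" if "z \<in> carrier G" for z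
      using cd that by (simp add: normal_core_def m_assoc)
    then show "c \<otimes> d \<in> normal_core G K"
      using cd K by (auto simp: normal_core_def subgroup.m_closed)
  qed (auto simp: normal_core_def)
  then show ?thesis
    using conj_closed by (auto simp: normal_inv_iff normal_core_def)
qed

lemma finite_rcosets_normal_core:
  assumes K: "subgroup K G" "finite (rcosets K)"
  shows "finite (rcosets (normal_core G K))"
proof (rule finite_rcosets_of_separating_map[of _ "\<lambda>a. \<lambda>S\<in>rcosets K. S #> a"])
  show "subgroup (normal_core G K) G"
    using normal_core_normal[OF K(1)] by (rule normal_imp_subgroup)
  have "(\<lambda>a. \<lambda>S\<in>rcosets K. S #> a) ` carrier G \<subseteq> rcosets K \<rightarrow>\<^sub>E rcosets K"
    using K(1) by (auto simp: rcosets_eq_image coset_mult_assoc subgroup.subset)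
  then show "finite ((\<lambda>a. \<lambda>S\<in>rcosets K. S #> a) ` carrier G)"
    using K(2) by (meson finite_PiE finite_subset)
next
  fix a b assume ab: "a \<in> carrier G" "b \<in> carrier G"
    and eq: "(\<lambda>S\<in>rcosets K. S #> a) = (\<lambda>S\<in>rcosets K. S #> b)"
  have "z \<otimes> (a \<otimes> inv b) \<otimes> inv z \<in> K" if z: "z \<in> carrier G" for z
  proof -
    have "(K #> z) #> a = (K #> z) #> b"
      using fun_cong[OF eq, of "K #> z"] z by (simp add: rcosets_eq_image)
    then have "K #> (z \<otimes> a) = K #> (z \<otimes> b)"
      using K(1) z ab by (simp add: coset_mult_assoc subgroup.subset)
    then have "(z \<otimes> a) \<otimes> inv (z \<otimes> b) \<in> K"
      using rcos_eq_imp_mult_inv_mem K(1) z ab by blast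
    then show ?thesis
      using z ab by (simp add: inv_mult_group m_assoc)
  qed
  then show "a \<otimes> inv b \<in> normal_core G K"
    using ab by (simp add: normal_core_def)
qed

lemma virtual_retract_of_normal_complement:
  assumes N: "N \<lhd> G" "finite (rcosets N)" and H: "subgroup H G" and NH: "N \<inter> H = {\<one>}"
  shows "\<exists>K. subgroup K G \<and> finite (rcosets K) \<and> H \<subseteq> K \<and>
           (\<exists>\<phi> \<in> hom (G\<lparr>carrier := K\<rparr>) (G\<lparr>carrier := H\<rparr>). \<forall>h\<in>H. \<phi> h = h)"
proof -
  interpret second_isomorphism_grp N G H
    using N(1) H by (simp add: second_isomorphism_grp_def second_isomorphism_grp_axioms_def)
  let ?K = "N <#> H" and ?\<pi> = "\<lambda>g. N #> g"
  have K: "subgroup ?K G"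
    by (rule normal_set_mult_subgroup)
  \<comment> \<open>\<open>?\<pi>\<close> maps \<open>H\<close> isomorphically onto \<open>NH/N\<close>; the retraction is \<open>?\<pi>\<close> followed by
    the inverse of this isomorphism\<close>
  have hom: "group_hom (G\<lparr>carrier := H\<rparr>) (G\<lparr>carrier := ?K\<rparr> Mod N) ?\<pi>"
    by (rule normal_intersection_hom)
  have inj: "inj_on ?\<pi> H"
    using group_hom.inj_iff_trivial_ker[OF hom] normal_intersection_hom_kernel NH by simp
  then have "?\<pi> \<in> iso (G\<lparr>carrier := H\<rparr>) (G\<lparr>carrier := ?K\<rparr> Mod N)"
    using hom normal_intersection_hom_surj by (simp add: iso_iff group_hom.homh)
  then have inv_iso: "inv_into H ?\<pi> \<in> hom (G\<lparr>carrier := ?K\<rparr> Mod N) (G\<lparr>carrier := H\<rparr>)"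
    using group.iso_set_sym[OF subgroup_imp_group[OF H]] by (auto simp: iso_def)
  have "N \<lhd> G\<lparr>carrier := ?K\<rparr>"
    using normal_restrict_supergroup[OF K N(1) H_contained_in_set_mult] .
  then have \<pi>_hom: "?\<pi> \<in> hom (G\<lparr>carrier := ?K\<rparr>) (G\<lparr>carrier := ?K\<rparr> Mod N)"
    using normal.r_coset_hom_Mod[of N "G\<lparr>carrier := ?K\<rparr>"] by simp
  have "inv_into H ?\<pi> \<circ> ?\<pi> \<in> hom (G\<lparr>carrier := ?K\<rparr>) (G\<lparr>carrier := H\<rparr>)"
    using Group.hom_compose[OF \<pi>_hom inv_iso] .
  moreover have "(inv_into H ?\<pi> \<circ> ?\<pi>) h = h" if "h \<in> H" for h
    using inj that by simp
  moreover have "finite (rcosets ?K)"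
    using finite_rcosets_mono[OF normal_imp_subgroup[OF N(1)] K H_contained_in_set_mult N(2)] .
  ultimately show ?thesis
    using K S_contained_in_set_mult by blast
qed

lemma infinite_subgroup_meets_finite_index_subgroup:
  assumes K: "subgroup K G" "finite (rcosets K)" and H: "subgroup H G" "infinite H"
  shows "\<exists>h \<in> H \<inter> K. h \<noteq> \<one>"
proof -
  obtain a b where ab: "a \<in> H" "b \<in> H" "a \<noteq> b" "a \<otimes> inv b \<in> K"
    using finite_rcosets_pigeonhole[OF K subgroup.subset[OF H(1)] H(2)] by blast
  have "a \<otimes> inv b \<in> H"
    using ab H(1) by (simp add: subgroup.m_closed subgroup.m_inv_closed)
  moreover have "a \<otimes> inv b \<noteq> \<one>"
    using ab H(1) subgroup.mem_carrier inv_solve_right' by fastforce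
  ultimately show ?thesis
    using ab(4) by blast
qed

lemma conj_commutator:
  assumes "x \<in> carrier G" "y \<in> carrier G" "z \<in> carrier G"
  shows "z \<otimes> (x \<otimes> y \<otimes> inv x \<otimes> inv y) \<otimes> inv z =
    (z \<otimes> x \<otimes> inv z) \<otimes> (z \<otimes> y \<otimes> inv z) \<otimes> inv (z \<otimes> x \<otimes> inv z) \<otimes> inv (z \<otimes> y \<otimes> inv z)"
  using assms by (simp add: m_assoc inv_mult_group)

lemma commutator_eq_one_imp_commute:
  assumes "x \<in> carrier G" "y \<in> carrier G" "x \<otimes> y \<otimes> inv x \<otimes> inv y = \<one>"
  shows "x \<otimes> y = y \<otimes> x"
proof -
  have "x \<otimes> y = (x \<otimes> y \<otimes> inv x \<otimes> inv y) \<otimes> (y \<otimes> x)"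
    using assms(1,2) by (simp add: m_assoc)
  then show ?thesis
    using assms by simp
qed

end

lemma (in group_hom) commutator_in_kernel:
  assumes "comm_group H" "x \<in> carrier G" "y \<in> carrier G"
  shows "x \<otimes> y \<otimes> inv x \<otimes> inv y \<in> kernel G H h"
proof -
  interpret H: comm_group H by (rule assms(1))
  have hx: "h x \<in> carrier H" and hy: "h y \<in> carrier H"
    using assms(2,3) by simp_all
  have "h (x \<otimes> y \<otimes> inv x \<otimes> inv y) = h x \<otimes>\<^bsub>H\<^esub> (h y \<otimes>\<^bsub>H\<^esub> (inv\<^bsub>H\<^esub> h x \<otimes>\<^bsub>H\<^esub> inv\<^bsub>H\<^esub> h y))"
    using assms(2,3) by (simp add: H.m_assoc)
  also have "\<dots> = h x \<otimes>\<^bsub>H\<^esub> (inv\<^bsub>H\<^esub> h x \<otimes>\<^bsub>H\<^esub> (h y \<otimes>\<^bsub>H\<^esub> inv\<^bsub>H\<^esub> h y))"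
    using hx hy by (subst H.m_lcomm[of "h y"]) simp_all
  also have "\<dots> = \<one>\<^bsub>H\<^esub>"
    using hx hy by simp
  finally have "h (x \<otimes> y \<otimes> inv x \<otimes> inv y) = \<one>\<^bsub>H\<^esub>" .
  then show ?thesis
    using assms(2,3) by (simp add: kernel_def)
qed

context group
begin

lemma commutative_normal_core_of_retract:
  assumes just_inf: "\<And>N. N \<lhd> G \<Longrightarrow> N \<noteq> {\<one>} \<Longrightarrow> finite (rcosets N)"
    and H: "subgroup H G" "infinite H" "comm_group (G\<lparr>carrier := H\<rparr>)"
    and K: "subgroup K G" "H \<subseteq> K"
    and \<phi>: "\<phi> \<in> hom (G\<lparr>carrier := K\<rparr>) (G\<lparr>carrier := H\<rparr>)" "\<forall>h\<in>H. \<phi> h = h"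
    and xy: "x \<in> normal_core G K" "y \<in> normal_core G K"
  shows "x \<otimes> y = y \<otimes> x"
proof -
  have xy_carrier: "x \<in> carrier G" "y \<in> carrier G"
    using xy by (simp_all add: normal_core_def)
  have \<phi>_hom: "group_hom (G\<lparr>carrier := K\<rparr>) (G\<lparr>carrier := H\<rparr>) \<phi>"
    using K(1) H(1) \<phi>(1) by (simp add: group_hom_def group_hom_axioms_def subgroup_imp_group)
  let ?L = "kernel (G\<lparr>carrier := K\<rparr>) (G\<lparr>carrier := H\<rparr>) \<phi>"
  have L: "subgroup ?L G"
    using incl_subgroup[OF K(1) group_hom.subgroup_kernel[OF \<phi>_hom]] .
  \<comment> \<open>the core meets the infinite group \<open>H\<close> trivially, so it cannot have finite index\<close>
  have "normal_core G ?L = {\<one>}"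
  proof (rule ccontr)
    assume "normal_core G ?L \<noteq> {\<one>}"
    then have "finite (rcosets (normal_core G ?L))"
      using just_inf normal_core_normal[OF L] by blast
    then obtain h where "h \<in> H" "h \<in> normal_core G ?L" "h \<noteq> \<one>"
      using infinite_subgroup_meets_finite_index_subgroup normal_core_normal[OF L] H(1,2)
      by (metis IntE normal_imp_subgroup)
    then show False
      using normal_core_subset[OF L] \<phi>(2) by (auto simp: kernel_def)
  qed
  moreover have "x \<otimes> y \<otimes> inv x \<otimes> inv y \<in> normal_core G ?L"
  proof -
    have core: "normal_core G K \<lhd> G"
      using normal_core_normal[OF K(1)] .
    have "z \<otimes> (x \<otimes> y \<otimes> inv x \<otimes> inv y) \<otimes> inv z \<in> ?L" if z: "z \<in> carrier G" for z
    proof -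
      have conj_K: "z \<otimes> x \<otimes> inv z \<in> K" "z \<otimes> y \<otimes> inv z \<in> K"
        using xy z normal.inv_op_closed2[OF core] normal_core_subset[OF K(1)] by blast+
      have "(z \<otimes> x \<otimes> inv z) \<otimes> (z \<otimes> y \<otimes> inv z) \<otimes>
          inv (z \<otimes> x \<otimes> inv z) \<otimes> inv (z \<otimes> y \<otimes> inv z) \<in> ?L"
        using group_hom.commutator_in_kernel[OF \<phi>_hom H(3), of "z \<otimes> x \<otimes> inv z" "z \<otimes> y \<otimes> inv z"]
          conj_K K(1)
        by simp
      then show ?thesis
        using xy_carrier z by (subst conj_commutator)
    qed
    then show ?thesis
      using xy core by (simp add: normal_core_def normal_imp_subgroup subgroup.mem_carrier)
  qed
  ultimately have "x \<otimes> y \<otimes> inv x \<otimes> inv y = \<one>"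
    by blast
  then show ?thesis
    using commutator_eq_one_imp_commute xy_carrier by blast
qed

lemma comm_group_generate_singleton:
  assumes "x \<in> carrier G"
  shows "comm_group (G\<lparr>carrier := generate G {x}\<rparr>)"
proof -
  have "G\<lparr>carrier := generate G {x}\<rparr> = subgroup_generated G {x}"
    using assms by (simp add: subgroup_generated_def)
  then show ?thesis
    using group.cyclic_imp_abelian_group[OF group_subgroup_generated cyclic_group_generated] by simp
qed

lemma finite_generate_singleton_iff:
  assumes "x \<in> carrier G"
  shows "finite (generate G {x}) \<longleftrightarrow> (\<exists>n::nat. n > 0 \<and> x [^] n = \<one>)"
  using finite_cyclic_subgroup[OF assms] assms by (simp add: carrier_subgroup_generated)

end

section \<open>Automorphisms of a spherically homogeneous tree\<close>

lemma tree_vertices_appendD: "xs @ ys \<in> tree_vertices m \<Longrightarrow> xs \<in> tree_vertices m"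
  by (auto simp: tree_vertices_def) (metis nth_append trans_less_add1 length_append)

lemma tree_vertices_take: "xs \<in> tree_vertices m \<Longrightarrow> take n xs \<in> tree_vertices m"
  by (metis append_take_drop_id tree_vertices_appendD)

definition tree_ball :: "(nat \<Rightarrow> nat) \<Rightarrow> nat \<Rightarrow> nat list set" where
  "tree_ball m n = {u \<in> tree_vertices m. length u \<le> n}"

lemma finite_tree_ball: "finite (tree_ball m n)"
proof (rule finite_subset)
  show "tree_ball m n \<subseteq> {xs. set xs \<subseteq> (\<Union>i<n. {..<m i}) \<and> length xs \<le> n}"
    by (force simp: tree_ball_def tree_vertices_def in_set_conv_nth)
  show "finite {xs. set xs \<subseteq> (\<Union>i<n. {..<m i}) \<and> length xs \<le> n}"
    by (rule finite_lists_length_le) simp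
qed

lemma finite_tree_level: "finite (tree_level m n)"
  by (rule finite_subset[OF _ finite_tree_ball[of m n]]) (auto simp: tree_level_def tree_ball_def)

context
  fixes m f assumes f: "is_tree_aut m f"
begin

lemma tree_aut_bij: "bij_betw f (tree_vertices m) (tree_vertices m)"
  using f by (simp add: is_tree_aut_def)

lemma tree_aut_outside: "u \<notin> tree_vertices m \<Longrightarrow> f u = u"
  using f by (simp add: is_tree_aut_def)

lemma tree_aut_root: "f [] = []"
  using f by (simp add: is_tree_aut_def)

lemma tree_aut_child_iff:
  "u \<in> tree_vertices m \<Longrightarrow> v \<in> tree_vertices m \<Longrightarrow> (\<exists>i. v = u @ [i]) \<longleftrightarrow> (\<exists>i. f v = f u @ [i])"
  using f by (simp add: is_tree_aut_def)

lemma tree_aut_vertex: "u \<in> tree_vertices m \<Longrightarrow> f u \<in> tree_vertices m"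
  using tree_aut_bij bij_betwE by blast

lemma tree_aut_inj: "u \<in> tree_vertices m \<Longrightarrow> w \<in> tree_vertices m \<Longrightarrow> f u = f w \<Longrightarrow> u = w"
  using tree_aut_bij by (auto dest: bij_betw_imp_inj_on inj_onD)

lemma tree_aut_append:
  "v @ ys \<in> tree_vertices m \<Longrightarrow> \<exists>zs. f (v @ ys) = f v @ zs \<and> length zs = length ys"
proof (induction ys rule: rev_induct)
  case (snoc y ys)
  then have "v @ ys \<in> tree_vertices m"
    by (metis append_assoc tree_vertices_appendD)
  with snoc obtain zs where "f (v @ ys) = f v @ zs" "length zs = length ys"
    by blast
  moreover obtain i where "f (v @ ys @ [y]) = f (v @ ys) @ [i]"
    using tree_aut_child_iff[OF \<open>v @ ys \<in> tree_vertices m\<close> snoc.prems] by auto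
  ultimately show ?case
    by (intro exI[of _ "zs @ [i]"]) simp
qed simp

lemma tree_aut_length: "u \<in> tree_vertices m \<Longrightarrow> length (f u) = length u"
  using tree_aut_append[of "[]" u] tree_aut_root by auto

lemma tree_aut_moves_prefix:
  assumes "v @ ys \<in> tree_vertices m" "f v \<noteq> v"
  shows "f (v @ ys) \<noteq> v @ zs"
proof -
  obtain zs' where "f (v @ ys) = f v @ zs'"
    using tree_aut_append[OF assms(1)] by blast
  moreover have "length (f v) = length v"
    using tree_aut_length tree_vertices_appendD[OF assms(1)] by blast
  ultimately show ?thesis
    using assms(2) by auto
qed

end

lemma tree_aut_eqI:
  assumes "is_tree_aut m f" "is_tree_aut m g" "\<And>u. u \<in> tree_vertices m \<Longrightarrow> f u = g u"
  shows "f = g"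
proof
  show "f u = g u" for u
    by (cases "u \<in> tree_vertices m")
      (simp_all add: assms(3) tree_aut_outside[OF assms(1)] tree_aut_outside[OF assms(2)])
qed

lemma tree_aut_comp:
  assumes f: "is_tree_aut m f" and g: "is_tree_aut m g"
  shows "is_tree_aut m (f \<circ> g)"
  unfolding is_tree_aut_def
proof (intro conjI allI impI ballI)
  show "bij_betw (f \<circ> g) (tree_vertices m) (tree_vertices m)"
    using tree_aut_bij[OF f] tree_aut_bij[OF g] by (rule bij_betw_trans[rotated])
  show "(f \<circ> g) [] = []"
    by (simp add: tree_aut_root[OF f] tree_aut_root[OF g])
  show "(f \<circ> g) x = x" if "x \<notin> tree_vertices m" for x
    using that by (simp add: tree_aut_outside[OF f] tree_aut_outside[OF g])
  show "(\<exists>i. v = u @ [i]) \<longleftrightarrow> (\<exists>i. (f \<circ> g) v = (f \<circ> g) u @ [i])"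
    if "u \<in> tree_vertices m" "v \<in> tree_vertices m" for u v
    using tree_aut_child_iff[OF g that]
      tree_aut_child_iff[OF f tree_aut_vertex[OF g that(1)] tree_aut_vertex[OF g that(2)]]
    by simp
qed

lemma tree_aut_id: "is_tree_aut m id"
  by (simp add: is_tree_aut_def)

lemma tree_aut_inverse:
  assumes f: "is_tree_aut m f"
  shows "\<exists>g. is_tree_aut m g \<and> g \<circ> f = id"
proof -
  define g where "g x = (if x \<in> tree_vertices m then inv_into (tree_vertices m) f x else x)" for x
  have bij: "bij_betw g (tree_vertices m) (tree_vertices m)"
    using bij_betw_inv_into[OF tree_aut_bij[OF f]]
    by (rule bij_betw_cong[THEN iffD1, rotated]) (simp add: g_def)
  have fg: "f (g x) = x" if "x \<in> tree_vertices m" for x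
    using that tree_aut_bij[OF f] by (simp add: g_def bij_betw_inv_into_right)
  have gf: "g (f x) = x" for x
    using tree_aut_bij[OF f] tree_aut_outside[OF f, of x]
    by (cases "x \<in> tree_vertices m")
       (auto simp: g_def tree_aut_vertex[OF f] bij_betw_imp_inj_on)
  have "is_tree_aut m g"
    unfolding is_tree_aut_def
  proof (intro conjI allI impI ballI)
    show "g [] = []"
      using gf[of "[]"] by (simp add: tree_aut_root[OF f])
    show "(\<exists>i. v = u @ [i]) \<longleftrightarrow> (\<exists>i. g v = g u @ [i])"
      if "u \<in> tree_vertices m" "v \<in> tree_vertices m" for u v
      using tree_aut_child_iff[OF f bij_betwE[OF bij, rule_format, OF that(1)]
          bij_betwE[OF bij, rule_format, OF that(2)]] fg that
      by simp
  qed (use bij in \<open>simp_all add: g_def\<close>)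
  moreover have "g \<circ> f = id"
    using gf by (simp add: fun_eq_iff)
  ultimately show ?thesis
    by blast
qed

lemma carrier_aut_tree [simp]: "carrier (aut_tree m) = {f. is_tree_aut m f}"
  by (simp add: aut_tree_def)

lemma mult_aut_tree [simp]: "x \<otimes>\<^bsub>aut_tree m\<^esub> y = x \<circ> y"
  by (simp add: aut_tree_def)

lemma one_aut_tree [simp]: "\<one>\<^bsub>aut_tree m\<^esub> = id"
  by (simp add: aut_tree_def)

lemma group_aut_tree: "group (aut_tree m)"
  by (rule groupI) (auto simp: tree_aut_comp tree_aut_id tree_aut_inverse o_assoc)

lemma aut_tree_inv_apply [simp]:
  assumes "is_tree_aut m f"
  shows "(inv\<^bsub>aut_tree m\<^esub> f) (f u) = u" "f ((inv\<^bsub>aut_tree m\<^esub> f) u) = u"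
  using group.l_inv[OF group_aut_tree, of f m] group.r_inv[OF group_aut_tree, of f m] assms
  by (simp_all add: fun_eq_iff)

lemma subgroup_tree_aut: "subgroup G (aut_tree m) \<Longrightarrow> g \<in> G \<Longrightarrow> is_tree_aut m g"
  using subgroup.subset by fastforce

lemma group_sub_grp: "subgroup G (aut_tree m) \<Longrightarrow> group (sub_grp m G)"
  by (rule group.subgroup_imp_group[OF group_aut_tree])

lemma inv_sub_grp [simp]:
  "subgroup G (aut_tree m) \<Longrightarrow> x \<in> G \<Longrightarrow> inv\<^bsub>sub_grp m G\<^esub> x = inv\<^bsub>aut_tree m\<^esub> x"
  by (rule group.m_inv_consistent[OF group_aut_tree])

lemma tree_aut_moves_vertex:
  assumes "is_tree_aut m f" "f \<noteq> id"
  obtains w where "w \<in> tree_vertices m" "f w \<noteq> w"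
  using tree_aut_eqI[OF assms(1) tree_aut_id] assms(2) by auto

lemma tree_aut_ball: "is_tree_aut m f \<Longrightarrow> u \<in> tree_ball m n \<Longrightarrow> f u \<in> tree_ball m n"
  by (simp add: tree_ball_def tree_aut_vertex tree_aut_length)

lemma subgroup_generate_sub_grp:
  assumes G: "subgroup G (aut_tree m)" and g: "g \<in> G"
  shows "subgroup (generate (aut_tree m) {g}) (sub_grp m G)"
proof -
  have "{g} \<subseteq> carrier (aut_tree m)"
    using subgroup.subset[OF G] g by blast
  then show ?thesis
    using group.subgroup_incl[OF group_aut_tree group.generate_is_subgroup[OF group_aut_tree] G]
      group.generate_subgroup_incl[OF group_aut_tree _ G] g by blast
qed

section \<open>Rigid stabilisers\<close>

lemma subgroup_rist:
  assumes G: "subgroup G (aut_tree m)"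
  shows "subgroup (rist m G v) (aut_tree m)"
proof (rule group.subgroupI[OF group_aut_tree])
  show "rist m G v \<subseteq> carrier (aut_tree m)"
    using subgroup.subset[OF G] by (auto simp: rist_def)
  show "rist m G v \<noteq> {}"
    using subgroup.one_closed[OF G] by (auto simp: rist_def)
  show "x \<otimes>\<^bsub>aut_tree m\<^esub> y \<in> rist m G v" if "x \<in> rist m G v" "y \<in> rist m G v" for x y
    using that subgroup.m_closed[OF G] by (simp add: rist_def)
  show "inv\<^bsub>aut_tree m\<^esub> x \<in> rist m G v" if x: "x \<in> rist m G v" for x
  proof -
    have "(inv\<^bsub>aut_tree m\<^esub> x) w = w" if "w \<in> tree_vertices m" "w \<notin> subtree m v" for w
      using x that aut_tree_inv_apply(1)[of m x w] subgroup_tree_aut[OF G] by (auto simp: rist_def)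
    then show ?thesis
      using x subgroup.m_inv_closed[OF G] by (auto simp: rist_def)
  qed
qed

lemma subgroup_rist_sub_grp:
  "subgroup G (aut_tree m) \<Longrightarrow> subgroup (rist m G v) (sub_grp m G)"
  using group.subgroup_incl[OF group_aut_tree subgroup_rist] by (auto simp: rist_def)

lemma rist_fixes_vertex:
  assumes G: "subgroup G (aut_tree m)" and r: "r \<in> rist m G v" and v: "v \<in> tree_vertices m"
  shows "r v = v"
proof (rule ccontr)
  assume moved: "r v \<noteq> v"
  have aut: "is_tree_aut m r"
    using r subgroup_tree_aut[OF G] by (simp add: rist_def)
  have "r v \<notin> subtree m v"
    using moved tree_aut_length[OF aut v] by (auto simp: subtree_def)
  then have "r (r v) = r v"
    using r tree_aut_vertex[OF aut v] by (simp add: rist_def)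
  then show False
    using moved tree_aut_inj[OF aut tree_aut_vertex[OF aut v] v] by simp
qed

lemma rist_maps_subtree:
  assumes G: "subgroup G (aut_tree m)" and r: "r \<in> rist m G v" and u: "u \<in> subtree m v"
  shows "r u \<in> subtree m v"
proof -
  have aut: "is_tree_aut m r"
    using r subgroup_tree_aut[OF G] by (simp add: rist_def)
  obtain ys where ys: "u = v @ ys" "v @ ys \<in> tree_vertices m"
    using u by (auto simp: subtree_def)
  then have "r v = v"
    using rist_fixes_vertex[OF G r] tree_vertices_appendD by blast
  then show ?thesis
    using tree_aut_append[OF aut ys(2)] tree_aut_vertex[OF aut ys(2)] ys(1) by (auto simp: subtree_def)
qed

lemma subtree_level_unique:
  "v \<in> tree_level m n \<Longrightarrow> v' \<in> tree_level m n \<Longrightarrow> u \<in> subtree m v \<Longrightarrow> u \<in> subtree m v' \<Longrightarrow> v = v'"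
  by (auto simp: subtree_def tree_level_def append_eq_append_conv)

lemma subtree_level_length: "v \<in> tree_level m n \<Longrightarrow> u \<in> subtree m v \<Longrightarrow> n \<le> length u"
  by (auto simp: subtree_def tree_level_def)

definition acts_by_rist :: "(nat \<Rightarrow> nat) \<Rightarrow> (nat list \<Rightarrow> nat list) set \<Rightarrow> nat \<Rightarrow> (nat list \<Rightarrow> nat list) \<Rightarrow> bool"
  where "acts_by_rist m G n f \<longleftrightarrow> (\<forall>u \<in> tree_vertices m. length u < n \<longrightarrow> f u = u) \<and>
    (\<forall>v \<in> tree_level m n. \<exists>r \<in> rist m G v. \<forall>u \<in> subtree m v. f u = r u)"

lemma acts_by_rist_rist:
  assumes G: "subgroup G (aut_tree m)" and v': "v' \<in> tree_level m n" and h: "h \<in> rist m G v'"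
  shows "acts_by_rist m G n h"
  unfolding acts_by_rist_def
proof (intro conjI ballI impI)
  show "h u = u" if "u \<in> tree_vertices m" "length u < n" for u
    using h that subtree_level_length[OF v'] by (force simp: rist_def)
  show "\<exists>r \<in> rist m G v. \<forall>u \<in> subtree m v. h u = r u" if v: "v \<in> tree_level m n" for v
  proof (cases "v = v'")
    case False
    have "h u = id u" if "u \<in> subtree m v" for u
    proof -
      have "u \<notin> subtree m v'"
        using subtree_level_unique[OF v v' that] False by blast
      then show ?thesis
        using h that by (simp add: rist_def subtree_def)
    qed
    moreover have "id \<in> rist m G v"
      using subgroup.one_closed[OF subgroup_rist[OF G]] by simp
    ultimately show ?thesis
      by blast
  qed (use h in blast)
qed

lemma acts_by_rist_comp:
  assumes G: "subgroup G (aut_tree m)" and f: "acts_by_rist m G n f" and g: "acts_by_rist m G n g"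
  shows "acts_by_rist m G n (f \<circ> g)"
  unfolding acts_by_rist_def
proof (intro conjI ballI impI)
  show "(f \<circ> g) u = u" if "u \<in> tree_vertices m" "length u < n" for u
    using f g that by (simp add: acts_by_rist_def)
  show "\<exists>r \<in> rist m G v. \<forall>u \<in> subtree m v. (f \<circ> g) u = r u" if v: "v \<in> tree_level m n" for v
  proof -
    obtain r s where r: "r \<in> rist m G v" "\<forall>u \<in> subtree m v. f u = r u"
      and s: "s \<in> rist m G v" "\<forall>u \<in> subtree m v. g u = s u"
      using f g v unfolding acts_by_rist_def by meson
    then have "\<forall>u \<in> subtree m v. (f \<circ> g) u = (r \<circ> s) u"
      using rist_maps_subtree[OF G s(1)] by simp
    moreover have "r \<circ> s \<in> rist m G v"
      using subgroup.m_closed[OF subgroup_rist[OF G] r(1) s(1)] by simp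
    ultimately show ?thesis
      by blast
  qed
qed

lemma Rist_acts_by_rist:
  assumes G: "subgroup G (aut_tree m)" and f: "f \<in> Rist m G n"
  shows "acts_by_rist m G n f"
  using f unfolding Rist_def
proof (induction rule: generate.induct)
  case one
  have "id \<in> rist m G v" for v
    using subgroup.one_closed[OF subgroup_rist[OF G]] by simp
  then have "acts_by_rist m G n id"
    unfolding acts_by_rist_def by (metis id_apply)
  then show ?case
    by (simp add: id_def)
next
  case (incl h)
  then show ?case
    using acts_by_rist_rist[OF G] by blast
next
  case (inv h)
  then show ?case
    using acts_by_rist_rist[OF G] subgroup.m_inv_closed[OF subgroup_rist[OF G]] by blast
next
  case (eng f g)
  show ?case
    unfolding mult_aut_tree by (rule acts_by_rist_comp[OF G eng.IH])
qed

lemma subgroup_Rist_sub_grp: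
  assumes G: "subgroup G (aut_tree m)"
  shows "subgroup (Rist m G n) (sub_grp m G)"
proof -
  have gens: "(\<Union>v \<in> tree_level m n. rist m G v) \<subseteq> G"
    by (auto simp: rist_def)
  then have "Rist m G n \<subseteq> G"
    unfolding Rist_def by (rule group.generate_subgroup_incl[OF group_aut_tree _ G])
  moreover have "subgroup (Rist m G n) (aut_tree m)"
    unfolding Rist_def using gens subgroup.subset[OF G]
    by (intro group.generate_is_subgroup[OF group_aut_tree]) blast
  ultimately show ?thesis
    using group.subgroup_incl[OF group_aut_tree _ G] by blast
qed

lemma finite_Rist:
  assumes G: "subgroup G (aut_tree m)" and fin: "\<forall>v \<in> tree_level m n. finite (rist m G v)"
  shows "finite (Rist m G n)"
proof -
  define glue where
    "glue c u = (if u \<in> tree_vertices m \<and> n \<le> length u then c (take n u) u else u)" for c u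
  have "f \<in> glue ` (\<Pi>\<^sub>E v \<in> tree_level m n. rist m G v)" if f: "f \<in> Rist m G n" for f
  proof -
    have acts: "acts_by_rist m G n f"
      using Rist_acts_by_rist[OF G f] .
    then have "\<forall>v \<in> tree_level m n. \<exists>r. r \<in> rist m G v \<and> (\<forall>u \<in> subtree m v. f u = r u)"
      by (auto simp: acts_by_rist_def)
    then obtain c where c: "\<forall>v \<in> tree_level m n. c v \<in> rist m G v \<and> (\<forall>u \<in> subtree m v. f u = c v u)"
      by (rule bchoice[elim_format]) blast
    have aut: "is_tree_aut m f"
      using subgroup.subset[OF subgroup_Rist_sub_grp[OF G, of n]] f subgroup_tree_aut[OF G] by auto
    have pointwise: "f u = glue (restrict c (tree_level m n)) u" for u
    proof (cases "u \<in> tree_vertices m \<and> n \<le> length u")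
      case True
      then have "take n u \<in> tree_level m n" "u \<in> subtree m (take n u)"
        by (auto simp: tree_level_def subtree_def tree_vertices_take intro: exI[of _ "drop n u"])
      then show ?thesis
        using c True by (simp add: glue_def)
    next
      case False
      then have "f u = u"
        using acts tree_aut_outside[OF aut] by (cases "u \<in> tree_vertices m") (auto simp: acts_by_rist_def)
      then show ?thesis
        using False by (auto simp: glue_def)
    qed
    have "f = glue (restrict c (tree_level m n))"
      by (rule ext, rule pointwise)
    moreover have "restrict c (tree_level m n) \<in> (\<Pi>\<^sub>E v \<in> tree_level m n. rist m G v)"
      using c by simp
    ultimately show ?thesis
      by blast
  qed
  then have "Rist m G n \<subseteq> glue ` (\<Pi>\<^sub>E v \<in> tree_level m n. rist m G v)"
    by blast
  then show ?thesis
    using finite_PiE[OF finite_tree_level, of m n "rist m G"] fin finite_surj by blast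
qed

lemma infinite_rist_at_level:
  assumes G: "subgroup G (aut_tree m)" and inf: "infinite G" and fi: "finite_index m G (Rist m G n)"
  obtains v where "v \<in> tree_level m n" "infinite (rist m G v)"
proof (rule ccontr)
  assume "\<not> thesis"
  then have "finite (Rist m G n)"
    using finite_Rist[OF G] that by blast
  then have "finite (carrier (sub_grp m G))"
    using group.finite_carrier_of_finite_rcosets[OF group_sub_grp[OF G] subgroup_Rist_sub_grp[OF G]] fi
    by (simp add: finite_index_def)
  then show False
    using inf by simp
qed

lemma normal_subgroup_moves_level:
  assumes G: "subgroup G (aut_tree m)" and tr: "level_transitive m G" and A: "A \<lhd> sub_grp m G"
    and a: "a \<in> A" "w \<in> tree_vertices m" "a w \<noteq> w" and v: "v \<in> tree_level m (length w)"
  obtains a' where "a' \<in> A" "a' v \<noteq> v"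
proof -
  interpret A: normal A "sub_grp m G"
    by (rule A)
  have a_aut: "is_tree_aut m a"
    using a(1) A.subset subgroup_tree_aut[OF G] by auto
  obtain x where x: "x \<in> G" "x w = v"
    using tr a(2) v by (auto simp: level_transitive_def tree_level_def)
  have x_aut: "is_tree_aut m x"
    using subgroup_tree_aut[OF G x(1)] .
  have "x \<circ> a \<circ> inv\<^bsub>aut_tree m\<^esub> x \<in> A"
    using A.inv_op_closed2[of x a] x(1) a(1) G by simp
  moreover have "(x \<circ> a \<circ> inv\<^bsub>aut_tree m\<^esub> x) v \<noteq> v"
  proof
    assume "(x \<circ> a \<circ> inv\<^bsub>aut_tree m\<^esub> x) v = v"
    then have "x (a w) = x w"
      using x(2)[symmetric] x_aut by simp
    then show False
      using a tree_aut_inj[OF x_aut tree_aut_vertex[OF a_aut a(2)] a(2)] by simp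
  qed
  ultimately show thesis
    using that by blast
qed

lemma rist_commuting_with_mover:
  assumes G: "subgroup G (aut_tree m)" and b: "b \<in> rist m G v"
    and a: "is_tree_aut m a" "a v \<noteq> v" and comm: "a \<circ> b = b \<circ> a"
  shows "b = id"
proof -
  have b_aut: "is_tree_aut m b"
    using b subgroup_tree_aut[OF G] by (simp add: rist_def)
  have "b u = u" if u: "u \<in> tree_vertices m" for u
  proof (cases "u \<in> subtree m v")
    case True
    then obtain ys where ys: "u = v @ ys"
      by (auto simp: subtree_def)
    \<comment> \<open>\<open>a\<close> moves the subtree at \<open>v\<close> off itself, where \<open>b\<close> acts trivially\<close>
    have "a u \<notin> subtree m v"
      using tree_aut_moves_prefix[OF a(1)] u ys a(2) by (auto simp: subtree_def)
    then have "b (a u) = a u"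
      using b tree_aut_vertex[OF a(1) u] by (simp add: rist_def)
    then have "a (b u) = a u"
      using comm by (metis comp_apply)
    then show ?thesis
      using tree_aut_inj[OF a(1) tree_aut_vertex[OF b_aut u] u] by simp
  qed (use b u in \<open>simp add: rist_def\<close>)
  then show ?thesis
    using tree_aut_eqI[OF b_aut tree_aut_id] by simp
qed

theorem branch_group_commutative_normal_infinite_index:
  assumes G: "subgroup G (aut_tree m)" and inf: "infinite G" and br: "branch_group m G"
    and A: "A \<lhd> sub_grp m G" and comm: "\<forall>x\<in>A. \<forall>y\<in>A. x \<circ> y = y \<circ> x"
  shows "\<not> finite_index m G A"
proof
  assume fi: "finite_index m G A"
  interpret A: normal A "sub_grp m G"
    by (rule A)
  have A_aut: "is_tree_aut m f" if "f \<in> A" for f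
    using that A.subset subgroup_tree_aut[OF G] by auto
  have "A \<noteq> {id}"
    using group.finite_carrier_of_finite_rcosets[OF group_sub_grp[OF G] A.subgroup_axioms] fi inf
    by (auto simp: finite_index_def)
  then obtain a where a: "a \<in> A" "a \<noteq> id"
    using subgroup.one_closed[OF A.subgroup_axioms] by auto
  obtain w where w: "w \<in> tree_vertices m" "a w \<noteq> w"
    using tree_aut_moves_vertex[OF A_aut[OF a(1)] a(2)] .
  obtain v where v: "v \<in> tree_level m (length w)" "infinite (rist m G v)"
    using infinite_rist_at_level[OF G inf] br by (auto simp: branch_group_def)
  obtain a' where a': "a' \<in> A" "a' v \<noteq> v"
    using normal_subgroup_moves_level[OF G _ A a(1) w v(1)] br by (auto simp: branch_group_def)
  obtain b where b: "b \<in> rist m G v" "b \<in> A" "b \<noteq> id"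
    using group.infinite_subgroup_meets_finite_index_subgroup[OF group_sub_grp[OF G] A.subgroup_axioms]
      fi subgroup_rist_sub_grp[OF G] v(2) by (auto simp: finite_index_def)
  then show False
    using rist_commuting_with_mover[OF G b(1) A_aut[OF a'(1)] a'(2)] comm a'(1) by blast
qed

theorem VRC_imp_torsion:
  assumes G: "subgroup G (aut_tree m)" and ji: "just_infinite m G" and br: "branch_group m G"
    and vrc: "has_VRC m G"
  shows "torsion_group m G"
  unfolding torsion_group_def
proof (rule ballI, rule ccontr)
  fix g assume g: "g \<in> G" and "\<not> (\<exists>n::nat. n > 0 \<and> g [^]\<^bsub>aut_tree m\<^esub> n = \<one>\<^bsub>aut_tree m\<^esub>)"
  let ?H = "generate (aut_tree m) {g}"
  interpret G: group "sub_grp m G"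
    using group_sub_grp[OF G] .
  have g_carrier: "g \<in> carrier (aut_tree m)"
    using subgroup.subset[OF G] g by blast
  have H: "subgroup ?H (sub_grp m G)" "infinite ?H" "comm_group ((sub_grp m G)\<lparr>carrier := ?H\<rparr>)"
    using subgroup_generate_sub_grp[OF G g]
      group.finite_generate_singleton_iff[OF group_aut_tree g_carrier] \<open>\<not> _\<close>
      group.comm_group_generate_singleton[OF group_aut_tree g_carrier] by simp_all
  obtain K \<phi> where K: "subgroup K (sub_grp m G)" "finite_index m G K" "?H \<subseteq> K"
    and \<phi>: "\<phi> \<in> hom (sub_grp m K) (sub_grp m ?H)" "\<forall>h\<in>?H. \<phi> h = h"
    using vrc g by (auto simp: has_VRC_def virtual_retract_def)
  let ?A = "normal_core (sub_grp m G) K"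
  have "?A \<lhd> sub_grp m G"
    using G.normal_core_normal[OF K(1)] .
  moreover have "finite_index m G ?A"
    using G.finite_rcosets_normal_core[OF K(1)] K(2) by (simp add: finite_index_def)
  moreover have "\<forall>x\<in>?A. \<forall>y\<in>?A. x \<circ> y = y \<circ> x"
    using G.commutative_normal_core_of_retract[OF _ H K(1,3)] \<phi> ji
    by (simp add: just_infinite_def finite_index_def)
  ultimately show False
    using branch_group_commutative_normal_infinite_index[OF G _ br] ji
    by (simp add: just_infinite_def)
qed

section \<open>Ball stabilisers\<close>

definition ball_stabiliser :: "(nat \<Rightarrow> nat) \<Rightarrow> (nat list \<Rightarrow> nat list) set \<Rightarrow> nat \<Rightarrow> (nat list \<Rightarrow> nat list) set"
  where "ball_stabiliser m G n = {g \<in> G. \<forall>u \<in> tree_ball m n. g u = u}"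

lemma normal_ball_stabiliser:
  assumes G: "subgroup G (aut_tree m)"
  shows "ball_stabiliser m G n \<lhd> sub_grp m G"
proof -
  interpret G: group "sub_grp m G"
    using group_sub_grp[OF G] .
  have inv_fixes: "(inv\<^bsub>aut_tree m\<^esub> h) u = u" if "h \<in> ball_stabiliser m G n" "u \<in> tree_ball m n" for h u
    using that aut_tree_inv_apply(1)[OF subgroup_tree_aut[OF G], of h u] by (auto simp: ball_stabiliser_def)
  have "subgroup (ball_stabiliser m G n) (sub_grp m G)"
  proof (rule G.subgroupI)
    show "ball_stabiliser m G n \<noteq> {}"
      using subgroup.one_closed[OF G] by (auto simp: ball_stabiliser_def)
  qed (use G inv_fixes subgroup.m_inv_closed[OF G] subgroup.m_closed[OF G] in
      \<open>auto simp: ball_stabiliser_def\<close>)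
  moreover have "x \<circ> h \<circ> inv\<^bsub>aut_tree m\<^esub> x \<in> ball_stabiliser m G n"
    if x: "x \<in> G" and h: "h \<in> ball_stabiliser m G n" for x h
  proof -
    have "h ((inv\<^bsub>aut_tree m\<^esub> x) u) = (inv\<^bsub>aut_tree m\<^esub> x) u" if "u \<in> tree_ball m n" for u
      using h tree_aut_ball[OF subgroup_tree_aut[OF G subgroup.m_inv_closed[OF G x]]] that
      by (auto simp: ball_stabiliser_def)
    then show ?thesis
      using x h subgroup_tree_aut[OF G x] G subgroup.m_closed[OF G] subgroup.m_inv_closed[OF G]
      by (auto simp: ball_stabiliser_def)
  qed
  ultimately show ?thesis
    using G by (auto simp: G.normal_inv_iff)
qed

lemma finite_index_ball_stabiliser:
  assumes G: "subgroup G (aut_tree m)"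
  shows "finite_index m G (ball_stabiliser m G n)"
  unfolding finite_index_def
proof (rule group.finite_rcosets_of_separating_map[OF group_sub_grp[OF G]])
  show "subgroup (ball_stabiliser m G n) (sub_grp m G)"
    using normal_ball_stabiliser[OF G] by (rule normal_imp_subgroup)
  have "restrict g (tree_ball m n) \<in> tree_ball m n \<rightarrow>\<^sub>E tree_ball m n" if "g \<in> G" for g
    using tree_aut_ball[OF subgroup_tree_aut[OF G that]] by auto
  then have "(\<lambda>g. restrict g (tree_ball m n)) ` G \<subseteq> tree_ball m n \<rightarrow>\<^sub>E tree_ball m n"
    by blast
  moreover have "finite (tree_ball m n \<rightarrow>\<^sub>E tree_ball m n)"
    by (rule finite_PiE) (rule finite_tree_ball)+
  ultimately show "finite ((\<lambda>g. restrict g (tree_ball m n)) ` carrier (sub_grp m G))"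
    by (simp add: finite_subset)
next
  fix a b assume a: "a \<in> carrier (sub_grp m G)" and b: "b \<in> carrier (sub_grp m G)"
    and eq: "restrict a (tree_ball m n) = restrict b (tree_ball m n)"
  have "a ((inv\<^bsub>aut_tree m\<^esub> b) u) = u" if "u \<in> tree_ball m n" for u
    using fun_cong[OF eq, of "(inv\<^bsub>aut_tree m\<^esub> b) u"] that b
      tree_aut_ball[OF subgroup_tree_aut[OF G subgroup.m_inv_closed[OF G]]] subgroup_tree_aut[OF G]
    by auto
  then show "a \<otimes>\<^bsub>sub_grp m G\<^esub> inv\<^bsub>sub_grp m G\<^esub> b \<in> ball_stabiliser m G n"
    using a b G subgroup.m_closed[OF G] subgroup.m_inv_closed[OF G] by (auto simp: ball_stabiliser_def)
qed

lemma finite_tree_aut_set_detected_on_ball: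
  assumes "finite H" "\<forall>h \<in> H. is_tree_aut m h"
  obtains n where "\<forall>h \<in> H. (\<forall>u \<in> tree_ball m n. h u = u) \<longrightarrow> h = id"
proof -
  have "\<forall>h \<in> H - {id}. \<exists>w. w \<in> tree_vertices m \<and> h w \<noteq> w"
    using assms(2) tree_aut_moves_vertex by (metis DiffE singletonI)
  then obtain w where w: "\<forall>h \<in> H - {id}. w h \<in> tree_vertices m \<and> h (w h) \<noteq> w h"
    by (rule bchoice[elim_format]) blast
  let ?n = "Max (length ` w ` (H - {id}))"
  have "h = id" if h: "h \<in> H" and fixed: "\<forall>u \<in> tree_ball m ?n. h u = u" for h
  proof (rule ccontr)
    assume "h \<noteq> id"
    then have "length (w h) \<le> ?n"
      using assms(1) h by (intro Max_ge) auto
    then have "w h \<in> tree_ball m ?n"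
      using w h \<open>h \<noteq> id\<close> by (simp add: tree_ball_def)
    then show False
      using w fixed h \<open>h \<noteq> id\<close> by blast
  qed
  then show thesis
    using that by blast
qed

theorem torsion_imp_VRC:
  assumes G: "subgroup G (aut_tree m)" and tor: "torsion_group m G"
  shows "has_VRC m G"
  unfolding has_VRC_def virtual_retract_def
proof
  fix g assume g: "g \<in> G"
  let ?H = "generate (aut_tree m) {g}"
  have H: "subgroup ?H (sub_grp m G)"
    using subgroup_generate_sub_grp[OF G g] .
  have "finite ?H"
    using group.finite_generate_singleton_iff[OF group_aut_tree] subgroup.subset[OF G] g tor
    by (auto simp: torsion_group_def)
  moreover have "\<forall>h \<in> ?H. is_tree_aut m h"
    using subgroup.subset[OF H] subgroup_tree_aut[OF G] by auto
  ultimately obtain n where n: "\<forall>h \<in> ?H. (\<forall>u \<in> tree_ball m n. h u = u) \<longrightarrow> h = id"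
    by (rule finite_tree_aut_set_detected_on_ball)
  have "h = id" if "h \<in> ball_stabiliser m G n" "h \<in> ?H" for h
    using n that by (simp add: ball_stabiliser_def)
  moreover have "id \<in> ball_stabiliser m G n" "id \<in> ?H"
    using subgroup.one_closed[OF H] subgroup.one_closed[OF G] by (auto simp: ball_stabiliser_def)
  ultimately have "ball_stabiliser m G n \<inter> ?H = {id}"
    by blast
  then show "\<exists>K. subgroup K (sub_grp m G) \<and> finite_index m G K \<and> ?H \<subseteq> K \<and>
      (\<exists>\<phi>\<in>hom (sub_grp m K) (sub_grp m ?H). \<forall>h\<in>?H. \<phi> h = h)"
    using group.virtual_retract_of_normal_complement[OF group_sub_grp[OF G]
        normal_ball_stabiliser[OF G] _ H] finite_index_ball_stabiliser[OF G]
    by (simp add: finite_index_def)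
qed

theorem lemma3p8:
  fixes m :: "nat \<Rightarrow> nat" and G :: "(nat list \<Rightarrow> nat list) set"
  assumes "\<forall>n. m n \<ge> 2"
    and "subgroup G (aut_tree m)"
    and "just_infinite m G"
    and "branch_group m G"
  shows "has_VRC m G \<longleftrightarrow> torsion_group m G"
  using VRC_imp_torsion[OF assms(2-4)] torsion_imp_VRC[OF assms(2)] by blast

end
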